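(* Fix $\varepsilon\in(0,1)$ and $n\ge2$. Suppose $\boldsymbol{X}\sim P(n,\tau,\mu_{\mathrm{L}},\mu_{\mathrm{R}})$ for some $\tau\in\mathbb{Z}^+$ and $\mu_{\mathrm{L}},\mu_{\mathrm{R}}\in\mathbb{R}$, and let $\eta=\tau/n$. (a) If $\mu_{\mathrm{L}}=\mu_{\mathrm{R}}$, then $\mathbb{P}\{\|\mathcal{C}(\boldsymbol{X})\|_\infty>\sqrt{2\log(n/\varepsilon)}\}\le\varepsilon$. (b) If $|\mu_{\mathrm{L}}-\mu_{\mathrm{R}}|\sqrt{\eta(1-\eta)}>\sqrt{8\log(n/\varepsilon)/n}$, then $\mathbb{P}\{\|\mathcal{C}(\boldsymbol{X})\|_\infty\le\sqrt{2\log(n/\varepsilon)}\}\le\varepsilon$.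
   Context: $P(n,\tau,\mu_{\mathrm{L}},\mu_{\mathrm{R}})$ denotes the law of $\boldsymbol{X}\sim N_n(\boldsymbol{\mu},I_n)$ with $\mu_i=\mu_{\mathrm{L}}\mathbb{1}\{i\le\tau\}+\mu_{\mathrm{R}}\mathbb{1}\{i>\tau\}$, $i\in[n]$. For $i\in[n-1]$ let $\boldsymbol{v}_i=\bigl(\sqrt{\tfrac{n-i}{in}}\boldsymbol{1}_i^\top,\,-\sqrt{\tfrac{i}{(n-i)n}}\boldsymbol{1}_{n-i}^\top\bigr)^\top$ and $\mathcal{C}(\boldsymbol{x})=(\boldsymbol{v}_1^\top\boldsymbol{x},\ldots,\boldsymbol{v}_{n-1}^\top\boldsymbol{x})^\top$ (the CUSUM transformation). *)

theory Defs
  imports "HOL-Probability.Probability"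
begin

definition cp_mean :: "nat \<Rightarrow> real \<Rightarrow> real \<Rightarrow> nat \<Rightarrow> real" where
  "cp_mean \<tau> \<mu>L \<mu>R i = (if i \<le> \<tau> then \<mu>L else \<mu>R)"

text \<open>The law P(n,tau,muL,muR) of X ~ N_n(mu, I_n): product of independent N(mu_i,1), coordinates 1..n.\<close>
definition cp_law :: "nat \<Rightarrow> nat \<Rightarrow> real \<Rightarrow> real \<Rightarrow> (nat \<Rightarrow> real) measure" where
  "cp_law n \<tau> \<mu>L \<mu>R =
     (\<Pi>\<^sub>M i\<in>{1..n}. density lborel (normal_density (cp_mean \<tau> \<mu>L \<mu>R i) 1))"

definition cusum_v :: "nat \<Rightarrow> nat \<Rightarrow> nat \<Rightarrow> real" where
  "cusum_v n i j = (if j \<le> i then sqrt ((real n - real i) / (real i * real n))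
                    else - sqrt (real i / ((real n - real i) * real n)))"

definition cusum :: "nat \<Rightarrow> (nat \<Rightarrow> real) \<Rightarrow> nat \<Rightarrow> real" where
  "cusum n x i = (\<Sum>j\<in>{1..n}. cusum_v n i j * x j)"

definition cusum_supnorm :: "nat \<Rightarrow> (nat \<Rightarrow> real) \<Rightarrow> real" where
  "cusum_supnorm n x = Max ((\<lambda>i. \<bar>cusum n x i\<bar>) ` {1..n-1})"

end

theory Submission
  imports Defs "HOL-Real_Asymp.Real_Asymp"
begin

text \<open>Each CUSUM coordinate \<open>v\<^sub>i\<^sup>T X\<close> is a linear combination of independent unit-variance
normals with a unit coefficient vector, hence is \<open>N(v\<^sub>i\<^sup>T \<mu>, 1)\<close>. Since \<open>v\<^sub>i\<close> is orthogonal to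
the constant vector, all these means vanish when \<open>\<mu>L = \<mu>R\<close>, while at \<open>i = \<tau>\<close> the mean is
\<open>sqrt (n \<eta> (1 - \<eta>)) (\<mu>L - \<mu>R)\<close>. The Mills-ratio bound \<open>P(|N(0,1)| > t) \<le> 2 \<phi>(t) / t\<close> at
\<open>t = sqrt (2 log (n / \<epsilon>))\<close> is at most \<open>\<epsilon> / n\<close>. Part (a) follows by a union bound over the
\<open>n - 1\<close> coordinates; in part (b) the mean at \<open>\<tau>\<close> exceeds \<open>2 t\<close>, so a sup-norm at most \<open>t\<close>
forces coordinate \<open>\<tau>\<close> to deviate from its mean by more than \<open>t\<close>.\<close>

lemma indep_vars_PiM_components:
  assumes M: "\<And>i. i \<in> I \<Longrightarrow> prob_space (M i)" and "I \<noteq> {}"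
  shows "prob_space.indep_vars (PiM I M) M (\<lambda>i x. x i) I"
proof -
  interpret prob_space "PiM I M" by (rule prob_space_PiM[OF M])
  have "distr (PiM I M) (PiM I M) (\<lambda>x. \<lambda>i\<in>I. x i) = distr (PiM I M) (PiM I M) (\<lambda>x. x)"
    by (intro distr_cong) (auto simp: space_PiM)
  also have "\<dots> = (\<Pi>\<^sub>M i\<in>I. distr (PiM I M) (M i) (\<lambda>x. x i))"
    by (auto intro!: PiM_cong simp: distr_PiM_component M)
  finally show ?thesis
    using \<open>I \<noteq> {}\<close> by (subst indep_vars_iff_distr_eq_PiM') auto
qed

lemma distributed_PiM_normal_component:
  assumes \<sigma>: "\<And>i. i \<in> I \<Longrightarrow> 0 < \<sigma> i" and "j \<in> I"
  shows "distributed (\<Pi>\<^sub>M i\<in>I. density lborel (normal_density (m i) (\<sigma> i))) lborel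
           (\<lambda>x. x j) (normal_density (m j) (\<sigma> j))"
proof -
  let ?N = "\<lambda>i. density lborel (normal_density (m i) (\<sigma> i))"
  have "distr (PiM I ?N) lborel (\<lambda>x. x j) = distr (PiM I ?N) (?N j) (\<lambda>x. x j)"
    by (intro distr_cong) auto
  also have "\<dots> = ?N j"
    using assms by (intro distr_PiM_component prob_space_normal_density) auto
  finally show ?thesis
    using \<open>j \<in> I\<close> by (auto simp: distributed_def cong: measurable_cong_sets)
qed

lemma distributed_PiM_normal_linear_combination:
  assumes "finite I" "I \<noteq> {}" and \<sigma>: "\<And>i. i \<in> I \<Longrightarrow> 0 < \<sigma> i"
    and a: "\<And>i. i \<in> I \<Longrightarrow> a i \<noteq> 0"
  shows "distributed (\<Pi>\<^sub>M i\<in>I. density lborel (normal_density (m i) (\<sigma> i))) lborel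
           (\<lambda>x. \<Sum>i\<in>I. a i * x i) (normal_density (\<Sum>i\<in>I. a i * m i) (sqrt (\<Sum>i\<in>I. (a i * \<sigma> i)\<^sup>2)))"
proof -
  let ?N = "\<lambda>i. density lborel (normal_density (m i) (\<sigma> i))"
  have N: "prob_space (?N i)" if "i \<in> I" for i
    using \<sigma>[OF that] by (rule prob_space_normal_density)
  interpret prob_space "PiM I ?N" by (rule prob_space_PiM[OF N])
  have indep: "indep_vars (\<lambda>_. borel) (\<lambda>i x. a i * x i) I"
    by (rule indep_vars_compose2[OF indep_vars_PiM_components[OF N \<open>I \<noteq> {}\<close>]]) auto
  have "distributed (PiM I ?N) lborel (\<lambda>x. 0 + a i * x i) (normal_density (0 + a i * m i) (\<bar>a i\<bar> * \<sigma> i))"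
    if "i \<in> I" for i
    using \<sigma> a that by (intro normal_density_affine distributed_PiM_normal_component) auto
  then have "distributed (PiM I ?N) lborel (\<lambda>x. \<Sum>i\<in>I. a i * x i)
      (normal_density (\<Sum>i\<in>I. a i * m i) (sqrt (\<Sum>i\<in>I. (\<bar>a i\<bar> * \<sigma> i)\<^sup>2)))"
    using assms by (intro sum_indep_normal indep) auto
  then show ?thesis by (simp add: power_mult_distrib)
qed

lemma std_normal_tail_nn_integral_le:
  fixes t :: real assumes t: "0 < t"
  shows "(\<integral>\<^sup>+z. ennreal (std_normal_density z) * indicator {t..} z \<partial>lborel) \<le> ennreal (std_normal_density t / t)"
proof -
  \<comment> \<open>on \<open>[t, \<infinity>)\<close> we have \<open>z / t \<ge> 1\<close>, and \<open>z \<phi>(z) = - \<phi>'(z)\<close> integrates in closed form\<close>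
  have "(\<integral>\<^sup>+z. ennreal (std_normal_density z) * indicator {t..} z \<partial>lborel)
     \<le> (\<integral>\<^sup>+z. ennreal (z / t * std_normal_density z) * indicator {t..} z \<partial>lborel)"
  proof (intro nn_integral_mono)
    fix z :: real
    have "std_normal_density z \<le> z / t * std_normal_density z" if "t \<le> z"
    proof -
      have "1 \<le> z / t" using that t by simp
      from mult_right_mono[OF this normal_density_nonneg] show ?thesis by simp
    qed
    then show "ennreal (std_normal_density z) * indicator {t..} z
        \<le> ennreal (z / t * std_normal_density z) * indicator {t..} z"
      by (auto simp: indicator_def ennreal_leI)
  qed
  also have "\<dots> = ennreal (0 - (- std_normal_density t / t))"
  proof (rule nn_integral_FTC_atLeast[where F="\<lambda>z. - std_normal_density z / t"])
    show "DERIV (\<lambda>z. - std_normal_density z / t) z :> z / t * std_normal_density z" for z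
      unfolding std_normal_density_def
      using t by (auto intro!: derivative_eq_intros simp: field_simps)
    have "((\<lambda>z::real. exp (- z\<^sup>2 / 2)) \<longlongrightarrow> 0) at_top" by real_asymp
    from tendsto_mult_left_zero[OF this, of "- 1 / (sqrt (2 * pi) * t)"]
    show "((\<lambda>z. - std_normal_density z / t) \<longlongrightarrow> 0) at_top"
      by (simp add: std_normal_density_def)
  qed (use t in auto)
  finally show ?thesis by simp
qed

lemma (in prob_space) std_normal_upper_tail_le:
  assumes W: "distributed M lborel W std_normal_density" and t: "0 < t"
  shows "prob {x \<in> space M. t \<le> W x} \<le> std_normal_density t / t"
proof -
  have "emeasure M {x \<in> space M. t \<le> W x} = emeasure M (W -` {t..} \<inter> space M)"
    by (auto intro: arg_cong[where f="emeasure M"])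
  also have "\<dots> = (\<integral>\<^sup>+z. ennreal (std_normal_density z) * indicator {t..} z \<partial>lborel)"
    by (rule distributed_emeasure[OF W]) simp
  also have "\<dots> \<le> ennreal (std_normal_density t / t)"
    by (rule std_normal_tail_nn_integral_le[OF t])
  finally show ?thesis
    using t by (simp add: emeasure_eq_measure ennreal_le_iff)
qed

lemma (in prob_space) normal_abs_deviation_tail_le:
  assumes Z: "distributed M lborel Z (normal_density c 1)" and t: "0 < t"
  shows "prob {x \<in> space M. t < \<bar>Z x - c\<bar>} \<le> 2 * std_normal_density t / t"
proof -
  have "distributed M lborel (\<lambda>x. b + s * Z x) (normal_density (b + s * c) (\<bar>s\<bar> * 1))"
    if "s \<noteq> 0" for b s
    using that by (intro normal_density_affine[OF Z]) auto
  from this[of 1 "- c"] this[of "-1" c]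
  have upper: "distributed M lborel (\<lambda>x. Z x - c) std_normal_density"
    and lower: "distributed M lborel (\<lambda>x. c - Z x) std_normal_density"
    by simp_all
  have [measurable]: "Z \<in> borel_measurable M"
    using distributed_measurable[OF Z] by simp
  have "prob {x \<in> space M. t < \<bar>Z x - c\<bar>}
      \<le> prob ({x \<in> space M. t \<le> Z x - c} \<union> {x \<in> space M. t \<le> c - Z x})"
    by (intro finite_measure_mono) auto
  also have "\<dots> \<le> prob {x \<in> space M. t \<le> Z x - c} + prob {x \<in> space M. t \<le> c - Z x}"
    by (intro measure_subadditive) auto
  also have "\<dots> \<le> 2 * std_normal_density t / t"
    using std_normal_upper_tail_le[OF upper t] std_normal_upper_tail_le[OF lower t] by simp
  finally show ?thesis .
qed

lemma normal_tail_bound_at_sqrt_2ln_le: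
  fixes r :: real assumes r: "2 \<le> r"
  shows "2 * std_normal_density (sqrt (2 * ln r)) / sqrt (2 * ln r) \<le> 1 / r"
proof -
  define t where "t = sqrt (2 * ln r)"
  have "1 / 2 \<le> ln (2::real)"
    using ln_diff_le[of 1 2] by simp
  also have "\<dots> \<le> ln r"
    using r by simp
  finally have L: "1 / 2 \<le> ln r" .
  have t: "0 < t" "t\<^sup>2 = 2 * ln r"
    using L by (simp_all add: t_def)
  have density: "std_normal_density t = 1 / (sqrt (2 * pi) * r)"
    using r by (simp add: std_normal_density_def t exp_minus field_simps)
  have "2 \<le> sqrt (2 * pi) * t"
  proof -
    have "3 * (1 / 2) \<le> pi * ln r"
      using L pi_gt3 by (intro mult_mono) auto
    then have "4 \<le> 2 * pi * t\<^sup>2"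
      unfolding t by simp
    then have "sqrt 4 \<le> sqrt (2 * pi * t\<^sup>2)" by (rule real_sqrt_le_mono)
    also have "\<dots> = sqrt (2 * pi) * t" using t(1) by (simp add: real_sqrt_mult)
    finally show ?thesis by simp
  qed
  then have "2 / (sqrt (2 * pi) * t) * (1 / r) \<le> 1 * (1 / r)"
    using r by (intro mult_right_mono) simp_all
  then show ?thesis
    unfolding t_def[symmetric] density by (simp add: ac_simps)
qed

lemma sum_atLeastAtMost_if_le:
  fixes A B :: "'a::comm_ring_1" assumes "i \<le> n"
  shows "(\<Sum>j\<in>{1..n}. if j \<le> i then A else B) = of_nat i * A + (of_nat n - of_nat i) * B"
proof -
  have "(\<Sum>j\<in>{1..n}. if j \<le> i then A else B)
      = (\<Sum>j\<in>{1..n} \<inter> {j. j \<le> i}. A) + (\<Sum>j\<in>{1..n} \<inter> - {j. j \<le> i}. B)"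
    by (rule sum.If_cases) simp
  also have "{1..n} \<inter> {j. j \<le> i} = {1..i}"
    using assms by auto
  also have "{1..n} \<inter> - {j. j \<le> i} = {i<..n}"
    using assms by auto
  finally show ?thesis
    using assms by (simp add: of_nat_diff)
qed

lemma mult_sqrt_divide_mult:
  fixes a b c :: real assumes "0 \<le> a"
  shows "a * sqrt (b / (a * c)) = sqrt (a * b / c)"
proof -
  have "a * sqrt (b / (a * c)) = sqrt (a\<^sup>2) * sqrt (b / (a * c))"
    using assms by simp
  also have "\<dots> = sqrt (a\<^sup>2 * (b / (a * c)))"
    by (rule real_sqrt_mult[symmetric])
  also have "a\<^sup>2 * (b / (a * c)) = a * b / c"
    by (cases "a = 0") (simp_all add: power2_eq_square)
  finally show ?thesis .
qed

lemma cusum_v_nonzero: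
  assumes "1 \<le> i" "i < n" shows "cusum_v n i j \<noteq> 0"
  using assms by (auto simp: cusum_v_def)

lemma cusum_v_sum_squares:
  assumes "1 \<le> i" "i < n" shows "(\<Sum>j\<in>{1..n}. (cusum_v n i j)\<^sup>2) = 1"
proof -
  have "(\<Sum>j\<in>{1..n}. (cusum_v n i j)\<^sup>2)
      = (\<Sum>j\<in>{1..n}. if j \<le> i then (real n - real i) / (real i * real n)
                       else real i / ((real n - real i) * real n))"
    using assms by (intro sum.cong) (auto simp: cusum_v_def)
  also have "\<dots> = 1"
    using assms by (subst sum_atLeastAtMost_if_le) (auto simp: field_simps)
  finally show ?thesis .
qed

lemma cusum_cp_mean_at_change_point:
  assumes "1 \<le> i" "i < n"
  shows "cusum n (cp_mean i \<mu>L \<mu>R) i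
           = sqrt (real n * (real i / real n * (1 - real i / real n))) * (\<mu>L - \<mu>R)"
proof -
  have left: "real i * sqrt ((real n - real i) / (real i * real n)) = sqrt (real i * (real n - real i) / real n)"
    by (rule mult_sqrt_divide_mult) simp
  have right: "(real n - real i) * sqrt (real i / ((real n - real i) * real n))
      = sqrt (real i * (real n - real i) / real n)"
    using assms mult_sqrt_divide_mult[of "real n - real i" "real i" "real n"] by (simp add: mult.commute)
  have "cusum n (cp_mean i \<mu>L \<mu>R) i
      = (\<Sum>j\<in>{1..n}. if j \<le> i then sqrt ((real n - real i) / (real i * real n)) * \<mu>L
                       else - sqrt (real i / ((real n - real i) * real n)) * \<mu>R)"
    unfolding cusum_def by (intro sum.cong) (auto simp: cusum_v_def cp_mean_def)
  also have "\<dots> = real i * sqrt ((real n - real i) / (real i * real n)) * \<mu>L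
                 - (real n - real i) * sqrt (real i / ((real n - real i) * real n)) * \<mu>R"
    using assms by (subst sum_atLeastAtMost_if_le) simp_all
  also have "\<dots> = sqrt (real i * (real n - real i) / real n) * (\<mu>L - \<mu>R)"
    unfolding left right by (simp add: algebra_simps)
  also have "real i * (real n - real i) / real n = real n * (real i / real n * (1 - real i / real n))"
    using assms by (simp add: field_simps)
  finally show ?thesis .
qed

lemma cusum_distributed:
  assumes "1 \<le> i" "i < n"
  shows "distributed (cp_law n \<tau> \<mu>L \<mu>R) lborel (\<lambda>x. cusum n x i)
           (normal_density (cusum n (cp_mean \<tau> \<mu>L \<mu>R) i) 1)"
  using distributed_PiM_normal_linear_combination[of "{1..n}" "\<lambda>_. 1" "cusum_v n i" "cp_mean \<tau> \<mu>L \<mu>R"]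
    assms cusum_v_nonzero[OF assms] cusum_v_sum_squares[OF assms]
  unfolding cp_law_def cusum_def by simp

lemma cusum_supnorm_exceeds_prob_le:
  assumes n: "2 \<le> n" and t: "0 < t"
  shows "measure (cp_law n \<tau> \<mu> \<mu>) {x \<in> space (cp_law n \<tau> \<mu> \<mu>). t < cusum_supnorm n x}
           \<le> real (n - 1) * (2 * std_normal_density t / t)"
proof -
  let ?M = "cp_law n \<tau> \<mu> \<mu>"
  interpret prob_space ?M
    unfolding cp_law_def by (intro prob_space_PiM prob_space_normal_density) simp
  let ?E = "\<lambda>i. {x \<in> space ?M. t < \<bar>cusum n x i\<bar>}"
  have coordinate: "distributed ?M lborel (\<lambda>x. cusum n x i) (normal_density 0 1)"
    and event: "?E i \<in> events" if "i \<in> {1..n-1}" for i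
  proof -
    have i: "1 \<le> i" "i < n"
      using that n by auto
    have "cp_mean \<tau> \<mu> \<mu> = cp_mean i \<mu> \<mu>"
      by (simp add: cp_mean_def fun_eq_iff)
    then show "distributed ?M lborel (\<lambda>x. cusum n x i) (normal_density 0 1)"
      using cusum_distributed[OF i, of \<tau> \<mu> \<mu>] cusum_cp_mean_at_change_point[OF i, of \<mu> \<mu>] by simp
    from distributed_measurable[OF this] have [measurable]: "(\<lambda>x. cusum n x i) \<in> borel_measurable ?M"
      by simp
    show "?E i \<in> events"
      by measurable
  qed
  have "{x \<in> space ?M. t < cusum_supnorm n x} = (\<Union>i\<in>{1..n-1}. ?E i)"
    using n by (auto simp: cusum_supnorm_def Max_gr_iff)
  then have "measure ?M {x \<in> space ?M. t < cusum_supnorm n x} \<le> (\<Sum>i\<in>{1..n-1}. prob (?E i))"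
    using event by (auto intro!: finite_measure_subadditive_finite)
  also have "\<dots> \<le> (\<Sum>i\<in>{1..n-1}. 2 * std_normal_density t / t)"
    using normal_abs_deviation_tail_le[OF coordinate t] by (intro sum_mono) simp
  finally show ?thesis by simp
qed

lemma cusum_supnorm_below_prob_le:
  assumes \<tau>: "1 \<le> \<tau>" "\<tau> < n" and s: "0 < s"
    and signal: "t + s < \<bar>cusum n (cp_mean \<tau> \<mu>L \<mu>R) \<tau>\<bar>"
  shows "measure (cp_law n \<tau> \<mu>L \<mu>R) {x \<in> space (cp_law n \<tau> \<mu>L \<mu>R). cusum_supnorm n x \<le> t}
           \<le> 2 * std_normal_density s / s"
proof -
  let ?M = "cp_law n \<tau> \<mu>L \<mu>R"
  let ?c = "cusum n (cp_mean \<tau> \<mu>L \<mu>R) \<tau>"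
  interpret prob_space ?M
    unfolding cp_law_def by (intro prob_space_PiM prob_space_normal_density) simp
  have coordinate: "distributed ?M lborel (\<lambda>x. cusum n x \<tau>) (normal_density ?c 1)"
    using cusum_distributed[OF \<tau>] .
  have [measurable]: "(\<lambda>x. cusum n x \<tau>) \<in> borel_measurable ?M"
    using distributed_measurable[OF coordinate] by simp
  have "{x \<in> space ?M. cusum_supnorm n x \<le> t} \<subseteq> {x \<in> space ?M. s < \<bar>cusum n x \<tau> - ?c\<bar>}"
  proof safe
    fix x assume "cusum_supnorm n x \<le> t"
    moreover have "\<bar>cusum n x \<tau>\<bar> \<le> cusum_supnorm n x"
      unfolding cusum_supnorm_def using \<tau> by (intro Max_ge) auto
    ultimately show "s < \<bar>cusum n x \<tau> - ?c\<bar>"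
      using signal by arith
  qed
  then have "measure ?M {x \<in> space ?M. cusum_supnorm n x \<le> t} \<le> prob {x \<in> space ?M. s < \<bar>cusum n x \<tau> - ?c\<bar>}"
    by (intro finite_measure_mono) measurable
  also have "\<dots> \<le> 2 * std_normal_density s / s"
    by (rule normal_abs_deviation_tail_le[OF coordinate s])
  finally show ?thesis .
qed

lemma detectable_change_point_lt:
  fixes L :: real
  assumes L: "0 \<le> L"
    and signal: "sqrt (8 * L / real n) < \<bar>\<mu>L - \<mu>R\<bar> * sqrt (real \<tau> / real n * (1 - real \<tau> / real n))"
  shows "\<tau> < n"
proof (rule ccontr)
  assume "\<not> \<tau> < n"
  have "real \<tau> / real n * (1 - real \<tau> / real n) \<le> 0"
  proof (cases "n = 0")
    case False
    with \<open>\<not> \<tau> < n\<close> have "1 \<le> real \<tau> / real n" by simp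
    then show ?thesis by (intro mult_nonneg_nonpos) simp_all
  qed simp
  then have "\<bar>\<mu>L - \<mu>R\<bar> * sqrt (real \<tau> / real n * (1 - real \<tau> / real n)) \<le> 0"
    by (simp add: mult_nonneg_nonpos)
  moreover have "0 \<le> sqrt (8 * L / real n)"
    using L by simp
  ultimately show False
    using signal by linarith
qed

lemma cusum_at_detectable_change_point_gt:
  fixes L :: real
  assumes \<tau>: "1 \<le> \<tau>" "\<tau> < n"
    and signal: "sqrt (8 * L / real n) < \<bar>\<mu>L - \<mu>R\<bar> * sqrt (real \<tau> / real n * (1 - real \<tau> / real n))"
  shows "sqrt (2 * L) + sqrt (2 * L) < \<bar>cusum n (cp_mean \<tau> \<mu>L \<mu>R) \<tau>\<bar>"
proof -
  define \<eta> where "\<eta> = real \<tau> / real n"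
  have \<eta>: "0 \<le> \<eta>" "\<eta> \<le> 1"
    using \<tau> by (simp_all add: \<eta>_def)
  have "sqrt (2 * L) + sqrt (2 * L) = sqrt 4 * sqrt (2 * L)"
    by simp
  also have "\<dots> = sqrt (real n) * sqrt (8 * L / real n)"
    unfolding real_sqrt_mult[symmetric] using \<tau> by simp
  also have "\<dots> < sqrt (real n) * (\<bar>\<mu>L - \<mu>R\<bar> * sqrt (\<eta> * (1 - \<eta>)))"
    using signal \<tau> by (simp add: \<eta>_def)
  also have "\<dots> = \<bar>sqrt (real n * (\<eta> * (1 - \<eta>))) * (\<mu>L - \<mu>R)\<bar>"
    using \<eta> by (simp add: abs_mult real_sqrt_mult)
  also have "\<dots> = \<bar>cusum n (cp_mean \<tau> \<mu>L \<mu>R) \<tau>\<bar>"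
    unfolding cusum_cp_mean_at_change_point[OF \<tau>] \<eta>_def ..
  finally show ?thesis .
qed

lemma cusum_false_alarm_prob_le:
  fixes \<epsilon> :: real
  assumes \<epsilon>: "0 < \<epsilon>" "\<epsilon> \<le> 1" and n: "2 \<le> n"
  shows "measure (cp_law n \<tau> \<mu> \<mu>)
           {x \<in> space (cp_law n \<tau> \<mu> \<mu>). sqrt (2 * ln (real n / \<epsilon>)) < cusum_supnorm n x} \<le> \<epsilon>"
proof -
  define t where "t = sqrt (2 * ln (real n / \<epsilon>))"
  have r: "2 \<le> real n / \<epsilon>"
    using \<epsilon> n by (simp add: field_simps)
  then have t: "0 < t"
    by (simp add: t_def)
  have "measure (cp_law n \<tau> \<mu> \<mu>) {x \<in> space (cp_law n \<tau> \<mu> \<mu>). t < cusum_supnorm n x}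
      \<le> real (n - 1) * (2 * std_normal_density t / t)"
    by (rule cusum_supnorm_exceeds_prob_le[OF n t])
  also have "\<dots> \<le> real (n - 1) * (\<epsilon> / real n)"
    using normal_tail_bound_at_sqrt_2ln_le[OF r] by (intro mult_left_mono) (simp_all add: t_def)
  also have "\<dots> \<le> \<epsilon>"
    using \<epsilon> n by (simp add: field_simps of_nat_diff)
  finally show ?thesis
    unfolding t_def .
qed

lemma cusum_missed_detection_prob_le:
  fixes \<epsilon> :: real
  assumes \<epsilon>: "0 < \<epsilon>" "\<epsilon> \<le> 1" and n: "2 \<le> n" and "1 \<le> \<tau>"
    and signal: "sqrt (8 * ln (real n / \<epsilon>) / real n)
                   < \<bar>\<mu>L - \<mu>R\<bar> * sqrt (real \<tau> / real n * (1 - real \<tau> / real n))"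
  shows "measure (cp_law n \<tau> \<mu>L \<mu>R)
           {x \<in> space (cp_law n \<tau> \<mu>L \<mu>R). cusum_supnorm n x \<le> sqrt (2 * ln (real n / \<epsilon>))} \<le> \<epsilon>"
proof -
  define t where "t = sqrt (2 * ln (real n / \<epsilon>))"
  have r: "2 \<le> real n / \<epsilon>"
    using \<epsilon> n by (simp add: field_simps)
  then have L: "0 \<le> ln (real n / \<epsilon>)" and t: "0 < t"
    by (simp_all add: t_def)
  have "\<tau> < n"
    using detectable_change_point_lt[OF L signal] .
  have "t + t < \<bar>cusum n (cp_mean \<tau> \<mu>L \<mu>R) \<tau>\<bar>"
    unfolding t_def by (rule cusum_at_detectable_change_point_gt[OF \<open>1 \<le> \<tau>\<close> \<open>\<tau> < n\<close> signal])
  then have "measure (cp_law n \<tau> \<mu>L \<mu>R) {x \<in> space (cp_law n \<tau> \<mu>L \<mu>R). cusum_supnorm n x \<le> t}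
      \<le> 2 * std_normal_density t / t"
    by (rule cusum_supnorm_below_prob_le[OF \<open>1 \<le> \<tau>\<close> \<open>\<tau> < n\<close> t])
  also have "\<dots> \<le> \<epsilon> / real n"
    using normal_tail_bound_at_sqrt_2ln_le[OF r] by (simp add: t_def)
  also have "\<dots> \<le> \<epsilon>"
    using \<epsilon> n by (simp add: field_simps)
  finally show ?thesis
    unfolding t_def .
qed

theorem lemma4p1:
  fixes \<epsilon> \<mu>L \<mu>R :: real and n \<tau> :: nat
  assumes "0 < \<epsilon>" and "\<epsilon> < 1" and "2 \<le> n" and "1 \<le> \<tau>"
  defines "\<eta> \<equiv> real \<tau> / real n"
  shows "(\<mu>L = \<mu>R \<longrightarrow>
            measure (cp_law n \<tau> \<mu>L \<mu>R)
              {x \<in> space (cp_law n \<tau> \<mu>L \<mu>R). cusum_supnorm n x > sqrt (2 * ln (real n / \<epsilon>))} \<le> \<epsilon>)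
       \<and> (\<bar>\<mu>L - \<mu>R\<bar> * sqrt (\<eta> * (1 - \<eta>)) > sqrt (8 * ln (real n / \<epsilon>) / real n) \<longrightarrow>
            measure (cp_law n \<tau> \<mu>L \<mu>R)
              {x \<in> space (cp_law n \<tau> \<mu>L \<mu>R). cusum_supnorm n x \<le> sqrt (2 * ln (real n / \<epsilon>))} \<le> \<epsilon>)"
proof -
  have "\<epsilon> \<le> 1"
    using assms by simp
  then show ?thesis
    unfolding \<eta>_def
    using cusum_false_alarm_prob_le[OF \<open>0 < \<epsilon>\<close> _ \<open>2 \<le> n\<close>]
      cusum_missed_detection_prob_le[OF \<open>0 < \<epsilon>\<close> _ \<open>2 \<le> n\<close> \<open>1 \<le> \<tau>\<close>]
    by auto
qed

end
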